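(* Let $P$ be a poset. Then $P$ is the colimit in $\mathbf{Pos}$ of each of the following inclusion functors: (i) $\mathbf{pmCh}_P\to\mathbf{Pos}$; (ii) $\mathbf{mCh}_P\to\mathbf{Pos}$.
   Context: $\mathbf{Pos}$ is the category of posets and order-preserving maps; $\mathbf{Pos}_{in}$ its wide subcategory of order-preserving inclusions. A chain of $P$ is a totally ordered sub-poset. $\mathbf{pmCh}_P$ is the subcategory of $\mathbf{Pos}_{in}$ consisting of the maximal chains of $P$ together with their pairwise pullbacks in $\mathbf{Pos}$ (the full sub-posets $C_1\cap C_2$ of $P$ for maximal chains $C_1,C_2$) and the inclusions between them. A chain quasi-pullback of two chains $C_1,C_2$ of $P$ is a chain $C_{12}$ with inclusions $C_{12}\to C_1$, $C_{12}\to C_2$ such that every chain $C'$ included in both $C_1$ and $C_2$ is included in $C_{12}$; these are exactly the maximal chains of $C_1\cap C_2$. $\mathbf{mCh}_P$ is the completion, under chain quasi-pullbacks, of the discrete subcategory of $\mathbf{Pos}_{in}$ consisting of the maximal chains of $P$ (with the resulting inclusions); it is a subcategory of the category of chains of $P$ and inclusions. *)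

theory Defs
  imports Main
begin

definition poset_on :: "'a set \<Rightarrow> ('a \<Rightarrow> 'a \<Rightarrow> bool) \<Rightarrow> bool" where
  "poset_on S le \<longleftrightarrow>
     (\<forall>x\<in>S. le x x) \<and>
     (\<forall>x\<in>S. \<forall>y\<in>S. le x y \<and> le y x \<longrightarrow> x = y) \<and>
     (\<forall>x\<in>S. \<forall>y\<in>S. \<forall>z\<in>S. le x y \<and> le y z \<longrightarrow> le x z)"

definition chain_in :: "'a set \<Rightarrow> ('a \<Rightarrow> 'a \<Rightarrow> bool) \<Rightarrow> 'a set \<Rightarrow> bool" where
  "chain_in S le C \<longleftrightarrow> C \<subseteq> S \<and> (\<forall>x\<in>C. \<forall>y\<in>C. le x y \<or> le y x)"

definition max_chain :: "'a set \<Rightarrow> ('a \<Rightarrow> 'a \<Rightarrow> bool) \<Rightarrow> 'a set \<Rightarrow> bool" where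
  "max_chain S le C \<longleftrightarrow> chain_in S le C \<and> (\<forall>D. chain_in S le D \<and> C \<subseteq> D \<longrightarrow> D = C)"

text \<open>Objects of pmCh_P: maximal chains and their pairwise intersections
  (taking C1 = C2 gives the maximal chains themselves).\<close>
definition pmCh_obj :: "'a set \<Rightarrow> ('a \<Rightarrow> 'a \<Rightarrow> bool) \<Rightarrow> 'a set set" where
  "pmCh_obj S le = {A. \<exists>C1 C2. max_chain S le C1 \<and> max_chain S le C2 \<and> A = C1 \<inter> C2}"

text \<open>Objects of mCh_P: the closure of the set of maximal chains under chain
  quasi-pullbacks, i.e. maximal chains of the sub-poset C1 \<inter> C2.\<close>
inductive_set mCh_obj :: "'a set \<Rightarrow> ('a \<Rightarrow> 'a \<Rightarrow> bool) \<Rightarrow> 'a set set"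
  for S :: "'a set" and le :: "'a \<Rightarrow> 'a \<Rightarrow> bool" where
  base: "max_chain S le C \<Longrightarrow> C \<in> mCh_obj S le"
| qpb: "C1 \<in> mCh_obj S le \<Longrightarrow> C2 \<in> mCh_obj S le \<Longrightarrow> max_chain (C1 \<inter> C2) le C
        \<Longrightarrow> C \<in> mCh_obj S le"

text \<open>A cocone over the diagram of sub-posets Ob (with all inclusions between them as
  morphisms) into the poset (T, leQ): a family of order-preserving maps f A : A \<rightarrow> T,
  compatible with the inclusions.\<close>
definition is_cocone :: "('a \<Rightarrow> 'a \<Rightarrow> bool) \<Rightarrow> 'a set set \<Rightarrow> 'b set \<Rightarrow> ('b \<Rightarrow> 'b \<Rightarrow> bool)
    \<Rightarrow> ('a set \<Rightarrow> 'a \<Rightarrow> 'b) \<Rightarrow> bool" where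
  "is_cocone le Ob T leQ f \<longleftrightarrow>
     (\<forall>A\<in>Ob. (\<forall>x\<in>A. f A x \<in> T) \<and> (\<forall>x\<in>A. \<forall>y\<in>A. le x y \<longrightarrow> leQ (f A x) (f A y))) \<and>
     (\<forall>A\<in>Ob. \<forall>B\<in>Ob. A \<subseteq> B \<longrightarrow> (\<forall>x\<in>A. f B x = f A x))"

definition mono_map :: "'a set \<Rightarrow> ('a \<Rightarrow> 'a \<Rightarrow> bool) \<Rightarrow> 'b set \<Rightarrow> ('b \<Rightarrow> 'b \<Rightarrow> bool)
    \<Rightarrow> ('a \<Rightarrow> 'b) \<Rightarrow> bool" where
  "mono_map S le T leQ g \<longleftrightarrow> (\<forall>x\<in>S. g x \<in> T) \<and> (\<forall>x\<in>S. \<forall>y\<in>S. le x y \<longrightarrow> leQ (g x) (g y))"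

text \<open>Universal property of the cocone of inclusions Ob \<rightarrow> P, tested against the
  poset (T, leQ) and the cocone f: there is a unique order-preserving g : P \<rightarrow> T
  (unique as a map on the carrier S) with g restricted to A equal to f A for all A.\<close>
definition colim_univ :: "'a set \<Rightarrow> ('a \<Rightarrow> 'a \<Rightarrow> bool) \<Rightarrow> 'a set set \<Rightarrow> 'b set
    \<Rightarrow> ('b \<Rightarrow> 'b \<Rightarrow> bool) \<Rightarrow> ('a set \<Rightarrow> 'a \<Rightarrow> 'b) \<Rightarrow> bool" where
  "colim_univ S le Ob T leQ f \<longleftrightarrow>
     (poset_on T leQ \<and> is_cocone le Ob T leQ f \<longrightarrow>
       (\<exists>g. mono_map S le T leQ g \<and> (\<forall>A\<in>Ob. \<forall>x\<in>A. g x = f A x)) \<and>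
       (\<forall>g g'. mono_map S le T leQ g \<and> (\<forall>A\<in>Ob. \<forall>x\<in>A. g x = f A x) \<and>
               mono_map S le T leQ g' \<and> (\<forall>A\<in>Ob. \<forall>x\<in>A. g' x = f A x)
               \<longrightarrow> (\<forall>x\<in>S. g x = g' x)))"

end

theory Submission
  imports Defs
begin

text \<open>By Zorn's lemma every comparable pair of elements of P lies in a maximal chain, so a
  cocone over a diagram containing all maximal chains glues to an order-preserving map on P,
  and that map is unique. The glued map is well defined because the values of two maximal
  chains at a common point agree through their intersection, which is an object of both
  diagrams.\<close>

lemma chain_in_extends_to_max_chain:
  assumes "chain_in S le D"
  shows "\<exists>C. max_chain S le C \<and> D \<subseteq> C"
proof -
  let ?A = "{C. chain_in S le C \<and> D \<subseteq> C}"
  have "\<exists>M\<in>?A. \<forall>X\<in>?A. M \<subseteq> X \<longrightarrow> X = M"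
  proof (rule subset_Zorn_nonempty)
    show "?A \<noteq> {}" using assms by blast
  next
    fix Ch assume "Ch \<noteq> {}" and ch: "subset.chain ?A Ch"
    have "chain_in S le (\<Union>Ch)"
      unfolding chain_in_def
    proof (intro conjI ballI)
      show "\<Union>Ch \<subseteq> S" using ch by (auto simp: subset_chain_def chain_in_def)
      fix x y assume "x \<in> \<Union>Ch" "y \<in> \<Union>Ch"
      then obtain X Y where XY: "X \<in> Ch" "Y \<in> Ch" "x \<in> X" "y \<in> Y" by blast
      moreover have "X \<subseteq> Y \<or> Y \<subseteq> X" using ch XY by (auto simp: subset_chain_def)
      ultimately obtain Z where "Z \<in> Ch" "x \<in> Z" "y \<in> Z" by blast
      with ch show "le x y \<or> le y x" by (auto simp: subset_chain_def chain_in_def)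
    qed
    moreover have "D \<subseteq> \<Union>Ch" using \<open>Ch \<noteq> {}\<close> ch by (fastforce simp: subset_chain_def)
    ultimately show "\<Union>Ch \<in> ?A" by simp
  qed
  then obtain M where "M \<in> ?A" and maximal: "\<forall>E\<in>?A. M \<subseteq> E \<longrightarrow> E = M" ..
  then have "chain_in S le M" "D \<subseteq> M" by simp_all
  have "max_chain S le M"
    unfolding max_chain_def
  proof (intro conjI allI impI)
    fix E assume "chain_in S le E \<and> M \<subseteq> E"
    with \<open>D \<subseteq> M\<close> maximal show "E = M" by blast
  qed fact
  with \<open>D \<subseteq> M\<close> show ?thesis by blast
qed

lemma max_chain_subset: "max_chain S le C \<Longrightarrow> C \<subseteq> S"
  by (auto simp: max_chain_def chain_in_def)

lemma comparable_in_max_chain: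
  assumes "poset_on S le" "x \<in> S" "y \<in> S" "le x y"
  shows "\<exists>C. max_chain S le C \<and> x \<in> C \<and> y \<in> C"
proof -
  have "le x x" "le y y" using assms(1-3) unfolding poset_on_def by blast+
  with assms(2-4) have "chain_in S le {x, y}" unfolding chain_in_def by blast
  then obtain C where "max_chain S le C" "{x, y} \<subseteq> C"
    using chain_in_extends_to_max_chain by blast
  then show ?thesis by blast
qed

lemma point_in_max_chain:
  assumes "poset_on S le" "x \<in> S"
  shows "\<exists>C. max_chain S le C \<and> x \<in> C"
proof -
  have "le x x" using assms unfolding poset_on_def by blast
  then show ?thesis using comparable_in_max_chain[OF assms assms(2)] by blast
qed

lemma mCh_obj_subset_max_chain:
  "A \<in> mCh_obj S le \<Longrightarrow> \<exists>C. max_chain S le C \<and> A \<subseteq> C"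
proof (induction rule: mCh_obj.induct)
  case (base C)
  then show ?case by blast
next
  case (qpb C1 C2 C)
  then have "C \<subseteq> C1" by (auto simp: max_chain_def chain_in_def)
  with qpb.IH(1) show ?case by blast
qed

lemma max_chain_Int_in_mCh_obj:
  assumes "max_chain S le C" "max_chain S le D"
  shows "C \<inter> D \<in> mCh_obj S le"
proof -
  have "max_chain (C \<inter> D) le (C \<inter> D)"
    using assms(1) by (auto simp: max_chain_def chain_in_def)
  then show ?thesis using mCh_obj.qpb mCh_obj.base assms by blast
qed

lemma max_chain_in_pmCh_obj: "max_chain S le C \<Longrightarrow> C \<in> pmCh_obj S le"
  unfolding pmCh_obj_def by blast

lemma max_chain_Int_in_pmCh_obj:
  "max_chain S le C \<Longrightarrow> max_chain S le D \<Longrightarrow> C \<inter> D \<in> pmCh_obj S le"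
  unfolding pmCh_obj_def by blast

lemma pmCh_obj_subset_max_chain:
  "A \<in> pmCh_obj S le \<Longrightarrow> \<exists>C. max_chain S le C \<and> A \<subseteq> C"
  unfolding pmCh_obj_def by blast

lemma is_cocone_in: "is_cocone le Ob T leQ f \<Longrightarrow> A \<in> Ob \<Longrightarrow> x \<in> A \<Longrightarrow> f A x \<in> T"
  unfolding is_cocone_def by blast

lemma is_cocone_mono:
  "is_cocone le Ob T leQ f \<Longrightarrow> A \<in> Ob \<Longrightarrow> x \<in> A \<Longrightarrow> y \<in> A \<Longrightarrow> le x y
    \<Longrightarrow> leQ (f A x) (f A y)"
  unfolding is_cocone_def by blast

lemma is_cocone_restrict:
  "is_cocone le Ob T leQ f \<Longrightarrow> A \<in> Ob \<Longrightarrow> B \<in> Ob \<Longrightarrow> A \<subseteq> B \<Longrightarrow> x \<in> A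
    \<Longrightarrow> f B x = f A x"
  unfolding is_cocone_def by blast

lemma cocone_agrees_on_max_chains:
  assumes cocone: "is_cocone le Ob T leQ f"
    and Ob_max: "\<And>C. max_chain S le C \<Longrightarrow> C \<in> Ob"
    and Ob_Int: "\<And>C D. max_chain S le C \<Longrightarrow> max_chain S le D \<Longrightarrow> C \<inter> D \<in> Ob"
    and C: "max_chain S le C" and D: "max_chain S le D" and x: "x \<in> C" "x \<in> D"
  shows "f C x = f D x"
proof -
  have "x \<in> C \<inter> D" using x by blast
  then have "f C x = f (C \<inter> D) x" and "f D x = f (C \<inter> D) x"
    using is_cocone_restrict[OF cocone Ob_Int[OF C D]] Ob_max[OF C] Ob_max[OF D] by auto
  then show ?thesis by simp
qed

lemma cocone_extends_to_mono_map:
  assumes P: "poset_on S le" and cocone: "is_cocone le Ob T leQ f"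
    and Ob_max: "\<And>C. max_chain S le C \<Longrightarrow> C \<in> Ob"
    and Ob_Int: "\<And>C D. max_chain S le C \<Longrightarrow> max_chain S le D \<Longrightarrow> C \<inter> D \<in> Ob"
    and Ob_sub: "\<And>A. A \<in> Ob \<Longrightarrow> \<exists>C. max_chain S le C \<and> A \<subseteq> C"
  shows "\<exists>g. mono_map S le T leQ g \<and> (\<forall>A\<in>Ob. \<forall>x\<in>A. g x = f A x)"
proof -
  define g where "g x = f (SOME C. max_chain S le C \<and> x \<in> C) x" for x
  have g_max_chain: "g x = f C x" if C: "max_chain S le C" "x \<in> C" for C x
  proof -
    have "\<exists>C. max_chain S le C \<and> x \<in> C" using C by blast
    then have "max_chain S le (SOME C. max_chain S le C \<and> x \<in> C) \<and>
        x \<in> (SOME C. max_chain S le C \<and> x \<in> C)"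
      by (rule someI_ex)
    then show ?thesis
      unfolding g_def using cocone_agrees_on_max_chains[OF cocone Ob_max Ob_Int] C by blast
  qed
  have "mono_map S le T leQ g"
    unfolding mono_map_def
  proof (intro conjI ballI impI)
    fix x assume "x \<in> S"
    then obtain C where "max_chain S le C" "x \<in> C" using point_in_max_chain[OF P] by blast
    then show "g x \<in> T" using g_max_chain is_cocone_in[OF cocone Ob_max] by simp
  next
    fix x y assume "x \<in> S" "y \<in> S" "le x y"
    then obtain C where C: "max_chain S le C" "x \<in> C" "y \<in> C"
      using comparable_in_max_chain[OF P] by blast
    then show "leQ (g x) (g y)"
      using g_max_chain is_cocone_mono[OF cocone Ob_max[OF C(1)] C(2,3) \<open>le x y\<close>] by simp
  qed
  moreover have "g x = f A x" if A: "A \<in> Ob" "x \<in> A" for A x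
  proof -
    obtain C where C: "max_chain S le C" "A \<subseteq> C" using Ob_sub[OF \<open>A \<in> Ob\<close>] by blast
    then have "g x = f C x" using g_max_chain \<open>x \<in> A\<close> by blast
    also have "\<dots> = f A x" using is_cocone_restrict[OF cocone A(1) Ob_max[OF C(1)] C(2) A(2)] .
    finally show ?thesis .
  qed
  ultimately show ?thesis by blast
qed

lemma colim_univ_if_max_chains_with_intersections:
  assumes P: "poset_on S le"
    and Ob_max: "\<And>C. max_chain S le C \<Longrightarrow> C \<in> Ob"
    and Ob_Int: "\<And>C D. max_chain S le C \<Longrightarrow> max_chain S le D \<Longrightarrow> C \<inter> D \<in> Ob"
    and Ob_sub: "\<And>A. A \<in> Ob \<Longrightarrow> \<exists>C. max_chain S le C \<and> A \<subseteq> C"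
  shows "colim_univ S le Ob T leQ f"
  unfolding colim_univ_def
proof (intro impI conjI allI)
  assume "poset_on T leQ \<and> is_cocone le Ob T leQ f"
  then show "\<exists>g. mono_map S le T leQ g \<and> (\<forall>A\<in>Ob. \<forall>x\<in>A. g x = f A x)"
    using cocone_extends_to_mono_map[OF P _ Ob_max Ob_Int Ob_sub] by blast
next
  fix g g'
  assume "mono_map S le T leQ g \<and> (\<forall>A\<in>Ob. \<forall>x\<in>A. g x = f A x) \<and>
      mono_map S le T leQ g' \<and> (\<forall>A\<in>Ob. \<forall>x\<in>A. g' x = f A x)"
  then have g: "\<forall>A\<in>Ob. \<forall>x\<in>A. g x = f A x" and g': "\<forall>A\<in>Ob. \<forall>x\<in>A. g' x = f A x"
    by blast+
  show "\<forall>x\<in>S. g x = g' x"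
  proof
    fix x assume "x \<in> S"
    then obtain C where "max_chain S le C" "x \<in> C" using point_in_max_chain[OF P] by blast
    with g g' Ob_max show "g x = g' x" by metis
  qed
qed

theorem proposition6p2:
  fixes S :: "'a set" and le :: "'a \<Rightarrow> 'a \<Rightarrow> bool"
    and T :: "'b set" and leQ :: "'b \<Rightarrow> 'b \<Rightarrow> bool" and f :: "'a set \<Rightarrow> 'a \<Rightarrow> 'b"
  assumes "poset_on S le"
  shows "(\<forall>A\<in>pmCh_obj S le. A \<subseteq> S) \<and> colim_univ S le (pmCh_obj S le) T leQ f
       \<and> (\<forall>A\<in>mCh_obj S le. A \<subseteq> S) \<and> colim_univ S le (mCh_obj S le) T leQ f"
proof -
  have "\<forall>A\<in>pmCh_obj S le. A \<subseteq> S"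
    using pmCh_obj_subset_max_chain max_chain_subset by blast
  moreover have "\<forall>A\<in>mCh_obj S le. A \<subseteq> S"
    using mCh_obj_subset_max_chain max_chain_subset by blast
  moreover have "colim_univ S le (pmCh_obj S le) T leQ f"
    by (rule colim_univ_if_max_chains_with_intersections[OF assms max_chain_in_pmCh_obj
          max_chain_Int_in_pmCh_obj pmCh_obj_subset_max_chain])
  moreover have "colim_univ S le (mCh_obj S le) T leQ f"
    by (rule colim_univ_if_max_chains_with_intersections[OF assms mCh_obj.base
          max_chain_Int_in_mCh_obj mCh_obj_subset_max_chain])
  ultimately show ?thesis by blast
qed

end
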